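(* Let $(\mathcal X,\mathcal B,\pi)$, $r$, an arbitrary real-valued noise field $\varepsilon$, $Q$, $Q_*$, $\alpha\in(0,1)$ be as in the context. Assume: (a) $p_0,p_{\rm ref}\in\mathcal P_\pi$ with $\int p|\log p|\,d\pi<\infty$ for $p\in\{p_0,p_{\rm ref}\}$; (b) $\mathbb E_{X\sim p}[e^{|r(X)+\varepsilon(X)|}]<\infty$ for all $p\in\mathcal P_\pi$; (c) $0<Q_*<\infty$, $Q\le Q_*$ everywhere; (d) $\operatorname*{ess\,sup}_x p_0(x)/p_{\rm ref}(x)<\infty$; (e) $\alpha>\Bigl(\int\frac{Q_*}{Q_*-Q(x)}p_{\rm ref}(x)\,\pi(dx)\Bigr)^{-1}$; (f) $Q_{\min}:=\operatorname*{ess\,inf}_x Q(x)>0$. Let $p_{t+1}(x)=\alpha p_{\rm ref}(x)+(1-\alpha)p_t(x)Q(x)/\mathbb E_{X\sim p_t}Q(X)$, $w_t:=p_t/p_{\rm ref}$, and let $w_*$ be the unique fixed point of $L_N$ in $\mathcal P_{\mathbb P_{\rm ref}}$. Then $d_{\mathcal H}(w_t,w_* )$ is finite and strictly decreasing for all $t\ge1$, and $\lim_{t\to\infty}d_{\mathcal H}(w_t,w_* )=0$.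
   Context: $\pi$ is $\sigma$-finite; $\mathcal P_\pi$ = probability densities w.r.t. $\pi$; $r$ measurable; $\{\varepsilon(x)\}$ a real-valued random field. $Q(x):=e^{r(x)}\mathbb E[e^{\varepsilon(x)}]$, $Q_*:=\operatorname*{ess\,sup}_\pi Q$. In (e), the integrand is $+\infty$ where $Q=Q_*$ and the reciprocal of $+\infty$ is $0$. $\mathbb P_{\rm ref}(dx)=p_{\rm ref}(x)\pi(dx)$; $\mathcal P_{\mathbb P_{\rm ref}}$ = probability densities w.r.t. $\mathbb P_{\rm ref}$; $\langle f,g\rangle_{\rm ref}=\int fg\,d\mathbb P_{\rm ref}$; cone $\mathcal K=\{f\in L^1(\mathbb P_{\rm ref}):f>0\ \mathbb P_{\rm ref}\text{-a.s.}\}$. $L[f]=\alpha\langle f,Q\rangle_{\rm ref}+(1-\alpha)fQ$ and $L_N[f]=L[f]/\langle f,Q\rangle_{\rm ref}=\alpha+(1-\alpha)fQ/\langle f,Q\rangle_{\rm ref}$ on $\mathcal K$ (under (c),(e) a unique fixed point of $L_N$ in $\mathcal P_{\mathbb P_{\rm ref}}$ exists). Hilbert projective metric: for $u,v\in\mathcal K$, $d_{\mathcal H}(u,v)=\log\bigl(\operatorname*{ess\,sup}\frac uv\cdot\operatorname*{ess\,sup}\frac vu\bigr)$, essential suprema w.r.t. $\mathbb P_{\rm ref}$. *)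

theory Defs
  imports "HOL-Probability.Probability"
begin

definition prob_density :: "'a measure \<Rightarrow> ('a \<Rightarrow> real) \<Rightarrow> bool" where
  "prob_density N p \<longleftrightarrow> p \<in> borel_measurable N \<and> (\<forall>x\<in>space N. 0 \<le> p x)
     \<and> (\<integral>\<^sup>+ x. ennreal (p x) \<partial>N) = 1"

definition essinf :: "'a measure \<Rightarrow> ('a \<Rightarrow> ereal) \<Rightarrow> ereal" where
  "essinf N f = - esssup N (\<lambda>x. - f x)"

definition Qext :: "'b measure \<Rightarrow> ('a \<Rightarrow> real) \<Rightarrow> ('a \<Rightarrow> 'b \<Rightarrow> real) \<Rightarrow> 'a \<Rightarrow> ennreal" where
  "Qext P r eps x = ennreal (exp (r x)) * (\<integral>\<^sup>+ \<omega>. ennreal (exp (eps x \<omega>)) \<partial>P)"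

definition Qstar :: "'a measure \<Rightarrow> 'b measure \<Rightarrow> ('a \<Rightarrow> real) \<Rightarrow> ('a \<Rightarrow> 'b \<Rightarrow> real) \<Rightarrow> ereal" where
  "Qstar M P r eps = esssup M (\<lambda>x. enn2ereal (Qext P r eps x))"

fun iterp :: "'a measure \<Rightarrow> real \<Rightarrow> ('a \<Rightarrow> real) \<Rightarrow> ('a \<Rightarrow> real) \<Rightarrow> ('a \<Rightarrow> real)
              \<Rightarrow> nat \<Rightarrow> 'a \<Rightarrow> real" where
  "iterp M \<alpha> Q pref p0 0 = p0"
| "iterp M \<alpha> Q pref p0 (Suc t) = (\<lambda>x. \<alpha> * pref x + (1 - \<alpha>) * iterp M \<alpha> Q pref p0 t x * Q x
        / (\<integral> y. iterp M \<alpha> Q pref p0 t y * Q y \<partial>M))"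

text \<open>Hilbert projective metric on the cone K, essential suprema w.r.t. N (= P_ref).
  Value in ereal; infinite iff the product of essential suprema is infinite.\<close>
definition hilbert_metric :: "'a measure \<Rightarrow> ('a \<Rightarrow> real) \<Rightarrow> ('a \<Rightarrow> real) \<Rightarrow> ereal" where
  "hilbert_metric N u v =
     (let s = esssup N (\<lambda>x. ereal (u x / v x)) * esssup N (\<lambda>x. ereal (v x / u x))
      in if s = \<infinity> then \<infinity> else ereal (ln (real_of_ereal s)))"

definition LN :: "'a measure \<Rightarrow> ('a \<Rightarrow> real) \<Rightarrow> real \<Rightarrow> ('a \<Rightarrow> real) \<Rightarrow> 'a \<Rightarrow> real" where
  "LN Pref Q \<alpha> f = (\<lambda>x. \<alpha> + (1 - \<alpha>) * f x * Q x / (\<integral> y. f y * Q y \<partial>Pref))"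

end

theory Submission
  imports Defs
begin

text \<open>Write \<open>lam = \<langle>w\<^sub>*, Q\<rangle>\<close>. The fixed-point equation reads
  \<open>w\<^sub>* (lam - (1 - \<alpha>) Q) = \<alpha> lam\<close>, and condition (e) forces \<open>lam > (1 - \<alpha>) Q\<^sub>*\<close>, so
  \<open>\<alpha> \<le> w\<^sub>* \<le> W = \<alpha> lam / (lam - (1 - \<alpha>) Q\<^sub>*)\<close>. Since
  \<open>L\<^sub>N f = \<alpha> + (lam / \<langle>f, Q\<rangle>) (f / w\<^sub>*) (w\<^sub>* - \<alpha>)\<close> and \<open>\<delta> w\<^sub>* \<le> \<alpha>\<close> for \<open>\<delta> = \<alpha> / W\<close>,
  bounds \<open>f \<le> a w\<^sub>*\<close>, \<open>w\<^sub>* \<le> k f\<close> yield bounds for \<open>L\<^sub>N f\<close> whose product is at most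
  \<open>\<delta> + (1 - \<delta>) a k\<close>. Hence \<open>\<rho>\<^sub>t = exp d\<^sub>H(w\<^sub>t, w\<^sub>*)\<close>, finite from \<open>t = 1\<close> on by (d), satisfies
  \<open>\<rho>\<^sub>t\<^sub>+\<^sub>1 - 1 \<le> (1 - \<delta>) (\<rho>\<^sub>t - 1)\<close>. Only (c), (d), (e) and the fixed-point property of \<open>w\<^sub>*\<close>
  are used.\<close>

section \<open>Affine contractions of the reals\<close>

lemma affine_le_scaled:
  fixes \<alpha> \<delta> a y :: real
  assumes "\<delta> * y \<le> \<alpha>" "1 \<le> a"
  shows "\<alpha> + a * (y - \<alpha>) \<le> (\<delta> + (1 - \<delta>) * a) * y"
proof -
  have "(\<delta> + (1 - \<delta>) * a) * y - (\<alpha> + a * (y - \<alpha>)) = (a - 1) * (\<alpha> - \<delta> * y)"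
    by (simp add: algebra_simps)
  moreover have "0 \<le> (a - 1) * (\<alpha> - \<delta> * y)"
    using assms by simp
  ultimately show ?thesis by linarith
qed

lemma scaled_le_affine:
  fixes \<alpha> \<delta> b y :: real
  assumes "\<delta> * y \<le> \<alpha>" "b \<le> 1"
  shows "(\<delta> + (1 - \<delta>) * b) * y \<le> \<alpha> + b * (y - \<alpha>)"
proof -
  have "\<alpha> + b * (y - \<alpha>) - (\<delta> + (1 - \<delta>) * b) * y = (1 - b) * (\<alpha> - \<delta> * y)"
    by (simp add: algebra_simps)
  moreover have "0 \<le> (1 - b) * (\<alpha> - \<delta> * y)"
    using assms by simp
  ultimately show ?thesis by linarith
qed

lemma convex_comb_divide_le:
  fixes \<delta> a b :: real
  assumes "0 < \<delta>" "\<delta> \<le> 1" "1 \<le> a" "0 < b" "b \<le> 1"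
  shows "(\<delta> + (1 - \<delta>) * a) / (\<delta> + (1 - \<delta>) * b) \<le> \<delta> + (1 - \<delta>) * (a / b)"
proof -
  define x where "x = a / b"
  have a: "a = x * b" and x: "1 \<le> x"
    using assms by (simp_all add: x_def le_divide_eq)
  have "(\<delta> + (1 - \<delta>) * x) * (\<delta> + (1 - \<delta>) * b) - (\<delta> + (1 - \<delta>) * a)
      = \<delta> * (1 - \<delta>) * ((1 - b) * (x - 1))"
    by (simp add: a algebra_simps)
  moreover have "0 \<le> \<delta> * (1 - \<delta>) * ((1 - b) * (x - 1))"
    using assms x by simp
  moreover have "0 < \<delta> + (1 - \<delta>) * b"
    using assms by (simp add: add_pos_nonneg)
  ultimately show ?thesis
    by (simp add: pos_divide_le_eq x_def[symmetric])
qed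

lemma affine_contraction_decreasing:
  fixes \<delta> \<rho> \<rho>' :: real
  assumes "0 < \<delta>" "1 \<le> \<rho>" "\<rho>' \<le> \<delta> + (1 - \<delta>) * \<rho>"
  shows "\<rho>' \<le> \<rho>" and "\<rho> \<noteq> 1 \<Longrightarrow> \<rho>' < \<rho>"
proof -
  have "\<delta> + (1 - \<delta>) * \<rho> = \<rho> - \<delta> * (\<rho> - 1)"
    by (simp add: algebra_simps)
  moreover have "0 \<le> \<delta> * (\<rho> - 1)" and "\<rho> \<noteq> 1 \<Longrightarrow> 0 < \<delta> * (\<rho> - 1)"
    using assms by simp_all
  ultimately show "\<rho>' \<le> \<rho>" and "\<rho> \<noteq> 1 \<Longrightarrow> \<rho>' < \<rho>"
    using assms(3) by linarith+
qed

lemma affine_contraction_ln_tendsto_zero: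
  fixes \<rho> :: "nat \<Rightarrow> real"
  assumes \<delta>: "0 < \<delta>" "\<delta> \<le> 1"
    and ge_1: "\<And>n. 1 \<le> \<rho> n"
    and contr: "\<And>n. \<rho> (Suc n) \<le> \<delta> + (1 - \<delta>) * \<rho> n"
  shows "(\<lambda>n. ln (\<rho> n)) \<longlonglongrightarrow> 0"
proof (rule real_tendsto_sandwich)
  have geometric: "\<rho> n - 1 \<le> (1 - \<delta>) ^ n * (\<rho> 0 - 1)" for n
  proof (induction n)
    case (Suc n)
    have "\<rho> (Suc n) - 1 \<le> (1 - \<delta>) * (\<rho> n - 1)"
      using contr[of n] by (simp add: algebra_simps)
    also have "\<dots> \<le> (1 - \<delta>) * ((1 - \<delta>) ^ n * (\<rho> 0 - 1))"
      using Suc \<delta> by (intro mult_left_mono) auto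
    finally show ?case by (simp add: mult.assoc)
  qed simp
  show "\<forall>\<^sub>F n in sequentially. ln (\<rho> n) \<le> (1 - \<delta>) ^ n * (\<rho> 0 - 1)"
    using ln_le_minus_one[of "\<rho> _"] ge_1 geometric
    by (intro always_eventually allI) (meson less_le_trans order_trans zero_less_one)
  show "\<forall>\<^sub>F n in sequentially. 0 \<le> ln (\<rho> n)"
    using ge_1 by simp
  have "\<bar>1 - \<delta>\<bar> < 1"
    using \<delta> by simp
  then show "(\<lambda>n. (1 - \<delta>) ^ n * (\<rho> 0 - 1)) \<longlonglongrightarrow> 0"
    by (intro tendsto_mult_left_zero LIMSEQ_power_zero) simp
qed simp

section \<open>Ratios of essential suprema\<close>

definition hilbert_ratio :: "'a measure \<Rightarrow> ('a \<Rightarrow> real) \<Rightarrow> ('a \<Rightarrow> real) \<Rightarrow> ereal" where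
  "hilbert_ratio N u v = esssup N (\<lambda>x. ereal (u x / v x)) * esssup N (\<lambda>x. ereal (v x / u x))"

lemma hilbert_metric_eq_ln_ratio:
  "hilbert_metric N u v =
     (if hilbert_ratio N u v = \<infinity> then \<infinity> else ereal (ln (real_of_ereal (hilbert_ratio N u v))))"
  by (simp add: hilbert_metric_def hilbert_ratio_def Let_def)

lemma hilbert_ratio_cong_AE:
  assumes "u \<in> borel_measurable N" "u' \<in> borel_measurable N" "v \<in> borel_measurable N"
    and "AE x in N. u x = u' x"
  shows "hilbert_ratio N u v = hilbert_ratio N u' v"
proof -
  have "esssup N (\<lambda>x. ereal (u x / v x)) = esssup N (\<lambda>x. ereal (u' x / v x))"
    "esssup N (\<lambda>x. ereal (v x / u x)) = esssup N (\<lambda>x. ereal (v x / u' x))"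
    using assms by (auto intro!: esssup_AE_cong elim!: eventually_mono)
  then show ?thesis
    by (simp add: hilbert_ratio_def)
qed

context prob_space
begin

lemma esssup_pos:
  assumes "AE x in M. 0 < f x"
  shows "0 < esssup M (\<lambda>x. ereal (f x))"
proof (rule ccontr)
  assume nonpos: "\<not> 0 < esssup M (\<lambda>x. ereal (f x))"
  have "AE x in M. False"
    using esssup_AE[where M=M and f="\<lambda>x. ereal (f x)"] assms
  proof eventually_elim
    case (elim x)
    then have "0 < ereal (f x)"
      by simp
    then show False
      using less_le_trans[OF _ elim(1)] nonpos by blast
  qed
  then show False
    by simp
qed

lemma esssup_ratio_pos:
  assumes "AE x in M. 0 < u x \<and> 0 < v x"
  shows "0 < esssup M (\<lambda>x. ereal (u x / v x))"
  using assms by (intro esssup_pos) (rule eventually_mono, auto)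

lemma hilbert_ratio_le:
  assumes "u \<in> borel_measurable M" "v \<in> borel_measurable M"
    and pos: "AE x in M. 0 < u x \<and> 0 < v x"
    and bounds: "AE x in M. u x \<le> A * v x \<and> v x \<le> K * u x"
  shows "hilbert_ratio M u v \<le> ereal (A * K)"
proof -
  have ratio_bounds: "AE x in M. u x / v x \<le> A \<and> v x / u x \<le> K"
    using pos bounds by eventually_elim (simp add: pos_divide_le_eq)
  have "esssup M (\<lambda>x. ereal (u x / v x)) \<le> ereal A"
    using ratio_bounds assms(1,2) by (intro esssup_I) (auto elim: eventually_mono)
  moreover have "esssup M (\<lambda>x. ereal (v x / u x)) \<le> ereal K"
    using ratio_bounds assms(1,2) by (intro esssup_I) (auto elim: eventually_mono)
  moreover have "0 < esssup M (\<lambda>x. ereal (u x / v x))" "0 < esssup M (\<lambda>x. ereal (v x / u x))"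
    using pos esssup_ratio_pos[of u v] esssup_ratio_pos[of v u] by (simp_all add: conj_commute)
  ultimately have "esssup M (\<lambda>x. ereal (u x / v x)) * esssup M (\<lambda>x. ereal (v x / u x))
      \<le> ereal A * ereal K"
    by (meson ereal_mult_mono less_imp_le order_trans)
  then show ?thesis
    by (simp add: hilbert_ratio_def)
qed

lemma one_le_hilbert_ratio:
  assumes "AE x in M. 0 < u x \<and> 0 < v x"
  shows "1 \<le> hilbert_ratio M u v"
proof -
  define a where "a = esssup M (\<lambda>x. ereal (u x / v x))"
  define k where "k = esssup M (\<lambda>x. ereal (v x / u x))"
  have "AE x in M. 0 < u x \<and> 0 < v x \<and> ereal (u x / v x) \<le> a \<and> ereal (v x / u x) \<le> k"
    using assms esssup_AE[where M=M and f="\<lambda>x. ereal (u x / v x)"] esssup_AE[where M=M and f="\<lambda>x. ereal (v x / u x)"]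
    by (auto simp: a_def k_def)
  then obtain x where x: "0 < u x" "0 < v x" "ereal (u x / v x) \<le> a" "ereal (v x / u x) \<le> k"
    using eventually_happens'[OF ae_filter_bot] by blast
  have "0 \<le> a" "0 \<le> k"
    using x order_trans[of 0 "ereal (u x / v x)" a] order_trans[of 0 "ereal (v x / u x)" k]
    by simp_all
  then have "ereal (u x / v x) * ereal (v x / u x) \<le> a * k"
    using x by (intro ereal_mult_mono) auto
  then have "ereal 1 \<le> a * k"
    using x by simp
  then show ?thesis
    unfolding one_ereal_def hilbert_ratio_def a_def k_def .
qed

lemma hilbert_ratio_finite_bounds:
  assumes "AE x in M. 0 < u x \<and> 0 < v x" "hilbert_ratio M u v < \<infinity>"
  obtains a k where "0 < a" "0 < k" "hilbert_ratio M u v = ereal (a * k)"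
    "AE x in M. u x \<le> a * v x \<and> v x \<le> k * u x"
proof -
  define ea where "ea = esssup M (\<lambda>x. ereal (u x / v x))"
  define ek where "ek = esssup M (\<lambda>x. ereal (v x / u x))"
  have pos: "0 < ea" "0 < ek"
    using assms(1) esssup_ratio_pos[of u v] esssup_ratio_pos[of v u]
    by (simp_all add: ea_def ek_def conj_commute)
  then obtain a k where a: "ea = ereal a" and k: "ek = ereal k"
    using assms(2) by (cases ea; cases ek) (auto simp: hilbert_ratio_def ea_def ek_def)
  have "AE x in M. u x \<le> a * v x \<and> v x \<le> k * u x"
    using assms(1) esssup_AE[where M=M and f="\<lambda>x. ereal (u x / v x)"] esssup_AE[where M=M and f="\<lambda>x. ereal (v x / u x)"]
    by eventually_elim (auto simp: ea_def[symmetric] ek_def[symmetric] a k pos_divide_le_eq)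
  with that show ?thesis
    using pos by (simp add: a k hilbert_ratio_def ea_def[symmetric] ek_def[symmetric])
qed

end

lemma ennreal_inverse_antimono:
  fixes a b :: ennreal
  assumes "a \<le> b"
  shows "inverse b \<le> inverse a"
proof (cases "a = 0 \<or> b = top")
  case False
  then obtain y where b: "b = ennreal y" "0 \<le> y"
    by (cases b) auto
  then have "a < top"
    using assms by (metis ennreal_less_top order_le_less_trans)
  then obtain x where a: "a = ennreal x" "0 \<le> x"
    by (cases a) auto
  have "0 < x" "x \<le> y"
    using False assms a b by (auto simp: less_le)
  then show ?thesis
    using a b by (simp add: inverse_ennreal le_imp_inverse_le)
qed auto

section \<open>Contraction of the normalized operator\<close>

locale LN_fixed_point = prob_space N for N :: "'a measure" +
  fixes Q :: "'a \<Rightarrow> real" and Qs \<alpha> :: real and wstar :: "'a \<Rightarrow> real"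
  assumes Q_meas: "Q \<in> borel_measurable N"
    and Q_nonneg: "\<And>x. x \<in> space N \<Longrightarrow> 0 \<le> Q x"
    and Q_le: "\<And>x. x \<in> space N \<Longrightarrow> Q x \<le> Qs"
    and alpha: "0 < \<alpha>" "\<alpha> < 1"
    and wstar_density: "prob_density N wstar"
    and wstar_fixed: "AE x in N. LN N Q \<alpha> wstar x = wstar x"
    and resolvent_large:
      "inverse (\<integral>\<^sup>+ x. (if Q x = Qs then \<infinity> else ennreal (Qs / (Qs - Q x))) \<partial>N) < ennreal \<alpha>"
begin

lemma wstar_meas: "wstar \<in> borel_measurable N"
  and wstar_nonneg: "x \<in> space N \<Longrightarrow> 0 \<le> wstar x"
  and nn_integral_wstar: "(\<integral>\<^sup>+ x. ennreal (wstar x) \<partial>N) = 1"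
  using wstar_density by (auto simp: prob_density_def)

lemma integrable_wstar: "integrable N wstar"
  using wstar_meas wstar_nonneg nn_integral_wstar by (intro integrableI_nonneg) auto

lemma integral_wstar: "(\<integral>x. wstar x \<partial>N) = 1"
  using wstar_meas wstar_nonneg nn_integral_wstar by (simp add: integral_eq_nn_integral)

lemma Qs_nonneg: "0 \<le> Qs"
  using not_empty Q_nonneg Q_le by (meson ex_in_conv order_trans)

lemma integrable_wstar_Q: "integrable N (\<lambda>x. wstar x * Q x)"
proof (rule Bochner_Integration.integrable_bound[OF integrable_mult_right[OF integrable_wstar, of Qs]])
  show "(\<lambda>x. wstar x * Q x) \<in> borel_measurable N"
    using wstar_meas Q_meas by measurable
  show "AE x in N. norm (wstar x * Q x) \<le> norm (Qs * wstar x)"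
    using wstar_nonneg Q_nonneg Q_le Qs_nonneg
    by (intro AE_I2) (auto simp: abs_mult mult.commute[of Qs] intro!: mult_left_mono)
qed

text \<open>\<open>pair_Q f\<close> is the paper's \<open>\<langle>f, Q\<rangle>\<^sub>r\<^sub>e\<^sub>f\<close>, the measure \<open>N\<close> playing \<open>P\<^sub>r\<^sub>e\<^sub>f\<close>;
  \<open>L[w\<^sub>*] = lam w\<^sub>*\<close> for the unnormalized operator \<open>L\<close>.\<close>

definition pair_Q :: "('a \<Rightarrow> real) \<Rightarrow> real" where
  "pair_Q f = (\<integral>x. f x * Q x \<partial>N)"

definition lam :: real where
  "lam = pair_Q wstar"

lemma LN_eq: "LN N Q \<alpha> f x = \<alpha> + (1 - \<alpha>) * f x * Q x / pair_Q f"
  by (simp add: LN_def pair_Q_def)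

lemma pair_Q_nonneg: "(\<And>x. x \<in> space N \<Longrightarrow> 0 \<le> f x) \<Longrightarrow> 0 \<le> pair_Q f"
  unfolding pair_Q_def using Q_nonneg by (intro integral_nonneg_AE AE_I2) simp

lemma LN_meas:
  assumes "f \<in> borel_measurable N"
  shows "LN N Q \<alpha> f \<in> borel_measurable N"
  unfolding LN_def using assms Q_meas by measurable

lemma LN_ge_alpha:
  assumes "\<And>x. x \<in> space N \<Longrightarrow> 0 \<le> f x" "x \<in> space N"
  shows "\<alpha> \<le> LN N Q \<alpha> f x"
  using assms alpha Q_nonneg pair_Q_nonneg[of f] by (simp add: LN_eq)

lemma alpha_le_wstar: "AE x in N. \<alpha> \<le> wstar x"
  using wstar_fixed AE_space by eventually_elim (metis LN_ge_alpha wstar_nonneg)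

lemma lam_pos: "0 < lam"
proof -
  have "lam \<noteq> 0"
  proof
    assume "lam = 0"
    then have "AE x in N. \<alpha> = wstar x"
      using wstar_fixed by (simp add: LN_eq lam_def)
    then have "(\<integral>x. wstar x \<partial>N) = (\<integral>x. \<alpha> \<partial>N)"
      using wstar_meas by (intro integral_cong_AE) (auto elim: eventually_mono)
    then have "(\<integral>x. wstar x \<partial>N) = \<alpha>"
      by (simp add: prob_space)
    then show False
      using integral_wstar alpha by simp
  qed
  then show ?thesis
    using pair_Q_nonneg wstar_nonneg by (simp add: lam_def order_less_le)
qed

lemma wstar_eigen: "AE x in N. (1 - \<alpha>) * Q x * wstar x = lam * (wstar x - \<alpha>)"
  using wstar_fixed
proof eventually_elim
  case (elim x)
  then have "wstar x * lam = \<alpha> * lam + (1 - \<alpha>) * wstar x * Q x"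
    using lam_pos by (simp add: LN_eq lam_def[symmetric] field_simps)
  then show ?case
    by (simp add: algebra_simps)
qed

lemma wstar_resolvent:
  "AE x in N. 0 < lam - (1 - \<alpha>) * Q x \<and> wstar x = \<alpha> * lam / (lam - (1 - \<alpha>) * Q x)"
  using wstar_eigen alpha_le_wstar
proof eventually_elim
  case (elim x)
  then have eq: "wstar x * (lam - (1 - \<alpha>) * Q x) = \<alpha> * lam"
    by (simp add: algebra_simps)
  moreover have "0 < \<alpha> * lam" "0 < wstar x"
    using alpha lam_pos elim(2) by simp_all
  ultimately have "0 < lam - (1 - \<alpha>) * Q x"
    by (metis zero_less_mult_pos)
  with eq show ?case
    by (simp add: eq_divide_eq)
qed

text \<open>Condition (e) is exactly what rules out \<open>lam \<le> (1 - \<alpha>) Q\<^sub>*\<close>: otherwise the resolvent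
  formula for \<open>w\<^sub>*\<close> gives \<open>Q\<^sub>* / (Q\<^sub>* - Q) \<le> w\<^sub>* / \<alpha>\<close>, whose integral is \<open>1 / \<alpha>\<close>.\<close>

lemma lam_gt: "(1 - \<alpha>) * Qs < lam"
proof (rule ccontr)
  assume "\<not> (1 - \<alpha>) * Qs < lam"
  then have lam_le: "lam \<le> (1 - \<alpha>) * Qs"
    by simp
  have "AE x in N. (if Q x = Qs then \<infinity> else ennreal (Qs / (Qs - Q x)))
      \<le> ennreal (1 / \<alpha>) * ennreal (wstar x)"
    using wstar_resolvent AE_space
  proof eventually_elim
    case (elim x)
    define D where "D = lam - (1 - \<alpha>) * Q x"
    have D: "0 < D" "wstar x / \<alpha> = lam / D"
      using elim alpha by (simp_all add: D_def)
    have "(1 - \<alpha>) * Q x < (1 - \<alpha>) * Qs"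
      using D(1) lam_le by (simp add: D_def)
    then have Q_less: "Q x < Qs"
      using alpha by simp
    have "Q x * lam \<le> Q x * ((1 - \<alpha>) * Qs)"
      using lam_le Q_nonneg[OF elim(2)] by (rule mult_left_mono)
    then have "Qs * D \<le> lam * (Qs - Q x)"
      by (simp add: D_def algebra_simps)
    then have "Qs / (Qs - Q x) \<le> wstar x / \<alpha>"
      using D Q_less by (simp add: pos_divide_le_eq pos_le_divide_eq)
    moreover have "ennreal (1 / \<alpha>) * ennreal (wstar x) = ennreal (wstar x / \<alpha>)"
      using alpha by (subst ennreal_mult'[symmetric]) simp_all
    ultimately show ?case
      using Q_less by (simp add: ennreal_leI)
  qed
  then have "(\<integral>\<^sup>+ x. (if Q x = Qs then \<infinity> else ennreal (Qs / (Qs - Q x))) \<partial>N)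
      \<le> (\<integral>\<^sup>+ x. ennreal (1 / \<alpha>) * ennreal (wstar x) \<partial>N)"
    by (rule nn_integral_mono_AE)
  also have "\<dots> = ennreal (1 / \<alpha>)"
    using wstar_meas by (simp add: nn_integral_cmult nn_integral_wstar)
  finally have "inverse (ennreal (1 / \<alpha>))
      \<le> inverse (\<integral>\<^sup>+ x. (if Q x = Qs then \<infinity> else ennreal (Qs / (Qs - Q x))) \<partial>N)"
    by (rule ennreal_inverse_antimono)
  then have "ennreal \<alpha> \<le> inverse (\<integral>\<^sup>+ x. (if Q x = Qs then \<infinity> else ennreal (Qs / (Qs - Q x))) \<partial>N)"
    using alpha by (simp add: inverse_ennreal)
  then show False
    using resolvent_large by simp
qed

definition W :: real where
  "W = \<alpha> * lam / (lam - (1 - \<alpha>) * Qs)"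

definition \<delta> :: real where
  "\<delta> = \<alpha> / W"

lemma wstar_le_W: "AE x in N. wstar x \<le> W"
  using wstar_resolvent AE_space
proof eventually_elim
  case (elim x)
  have "lam - (1 - \<alpha>) * Qs \<le> lam - (1 - \<alpha>) * Q x"
    using Q_le[OF elim(2)] alpha by simp
  then show ?case
    using elim(1) lam_gt alpha lam_pos
    by (simp add: W_def divide_left_mono)
qed

lemma alpha_le_W: "\<alpha> \<le> W"
proof -
  have "\<alpha> * (lam - (1 - \<alpha>) * Qs) \<le> \<alpha> * lam"
    using alpha Qs_nonneg by simp
  then show ?thesis
    using lam_gt by (simp add: W_def le_divide_eq)
qed

lemma delta_pos: "0 < \<delta>" and delta_le_1: "\<delta> \<le> 1"
  using alpha alpha_le_W by (simp_all add: \<delta>_def)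

lemma delta_wstar_le: "AE x in N. \<delta> * wstar x \<le> \<alpha>"
  using wstar_le_W by eventually_elim (use alpha alpha_le_W in \<open>simp add: \<delta>_def divide_le_eq\<close>)

lemma integrable_mult_Q:
  assumes "f \<in> borel_measurable N" "\<And>x. x \<in> space N \<Longrightarrow> 0 \<le> f x"
    and "AE x in N. f x \<le> A * wstar x"
  shows "integrable N (\<lambda>x. f x * Q x)"
proof (rule Bochner_Integration.integrable_bound[OF integrable_mult_right[OF integrable_wstar_Q]])
  show "(\<lambda>x. f x * Q x) \<in> borel_measurable N"
    using assms(1) Q_meas by measurable
  show "AE x in N. norm (f x * Q x) \<le> norm (\<bar>A\<bar> * (wstar x * Q x))"
    using assms(3) AE_space
  proof eventually_elim
    case (elim x)
    have "f x * Q x \<le> A * (wstar x * Q x)"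
      using elim Q_nonneg by (simp add: mult.assoc[symmetric] mult_right_mono)
    also have "\<dots> \<le> \<bar>A\<bar> * (wstar x * Q x)"
      using elim wstar_nonneg Q_nonneg by (intro mult_right_mono) auto
    finally show ?case
      using elim assms(2) wstar_nonneg Q_nonneg by (simp add: abs_mult)
  qed
qed

lemma pair_Q_ratio_bounds:
  assumes "f \<in> borel_measurable N" "\<And>x. x \<in> space N \<Longrightarrow> 0 \<le> f x"
    and bounds: "AE x in N. f x \<le> A * wstar x \<and> wstar x \<le> K * f x"
  shows "pair_Q f \<le> A * lam" and "lam \<le> K * pair_Q f"
proof -
  have int: "integrable N (\<lambda>x. f x * Q x)"
    using bounds by (intro integrable_mult_Q[OF assms(1,2)]) (auto elim: eventually_mono)
  have "AE x in N. f x * Q x \<le> A * (wstar x * Q x) \<and> wstar x * Q x \<le> K * (f x * Q x)"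
    using bounds AE_space
  proof eventually_elim
    case (elim x)
    then show ?case
      using Q_nonneg[OF elim(2)] by (metis mult.assoc mult_right_mono)
  qed
  then have upper: "AE x in N. f x * Q x \<le> A * (wstar x * Q x)"
    and lower: "AE x in N. wstar x * Q x \<le> K * (f x * Q x)"
    by (auto elim: eventually_mono)
  have "(\<integral>x. f x * Q x \<partial>N) \<le> (\<integral>x. A * (wstar x * Q x) \<partial>N)"
    using int integrable_mult_right[OF integrable_wstar_Q] upper by (rule integral_mono_AE)
  moreover have "(\<integral>x. wstar x * Q x \<partial>N) \<le> (\<integral>x. K * (f x * Q x) \<partial>N)"
    using integrable_wstar_Q integrable_mult_right[OF int] lower by (rule integral_mono_AE)
  ultimately show "pair_Q f \<le> A * lam" and "lam \<le> K * pair_Q f"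
    by (simp_all add: pair_Q_def lam_def)
qed

lemma LN_eq_affine:
  "AE x in N. LN N Q \<alpha> f x = \<alpha> + lam / pair_Q f * (f x / wstar x) * (wstar x - \<alpha>)"
  using wstar_eigen alpha_le_wstar
proof eventually_elim
  case (elim x)
  then have "wstar x \<noteq> 0"
    using alpha by auto
  then have "(1 - \<alpha>) * f x * Q x = f x / wstar x * ((1 - \<alpha>) * Q x * wstar x)"
    by (simp add: field_simps)
  also have "\<dots> = f x / wstar x * (lam * (wstar x - \<alpha>))"
    using elim(1) by simp
  finally show ?case
    by (simp add: LN_eq ac_simps)
qed

lemma LN_ratio_bounds:
  assumes "f \<in> borel_measurable N" "\<And>x. x \<in> space N \<Longrightarrow> 0 \<le> f x"
    and bounds: "AE x in N. f x \<le> a * wstar x \<and> wstar x \<le> k * f x" and "0 < k"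
  shows "AE x in N. LN N Q \<alpha> f x \<le> (\<delta> + (1 - \<delta>) * (a * lam / pair_Q f)) * wstar x
    \<and> (\<delta> + (1 - \<delta>) * (lam / (k * pair_Q f))) * wstar x \<le> LN N Q \<alpha> f x"
proof -
  define c where "c = pair_Q f"
  have c: "c \<le> a * lam" "lam \<le> k * c"
    using pair_Q_ratio_bounds[OF assms(1-3)] by (simp_all add: c_def)
  then have c_pos: "0 < c"
    using lam_pos \<open>0 < k\<close> by (metis order_less_le_trans zero_less_mult_pos)
  show ?thesis
    using LN_eq_affine[of f] bounds alpha_le_wstar delta_wstar_le
    unfolding c_def[symmetric]
  proof eventually_elim
    case (elim x)
    have w: "0 < wstar x" "0 \<le> wstar x - \<alpha>"
      using elim(3) alpha by simp_all
    have "f x / wstar x \<le> a" "1 / k \<le> f x / wstar x"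
      using elim(2) w \<open>0 < k\<close> by (simp_all add: pos_divide_le_eq pos_le_divide_eq field_simps)
    then have s: "lam / c * (f x / wstar x) \<le> a * lam / c"
      "lam / (k * c) \<le> lam / c * (f x / wstar x)"
      using w lam_pos c_pos \<open>0 < k\<close> by (auto simp: field_simps)
    have "lam / c * (f x / wstar x) * (wstar x - \<alpha>) \<le> a * lam / c * (wstar x - \<alpha>)"
      and "lam / (k * c) * (wstar x - \<alpha>) \<le> lam / c * (f x / wstar x) * (wstar x - \<alpha>)"
      using mult_right_mono[OF s(1) w(2)] mult_right_mono[OF s(2) w(2)] .
    moreover have "1 \<le> a * lam / c" "lam / (k * c) \<le> 1"
      using c c_pos \<open>0 < k\<close> by (simp_all add: pos_le_divide_eq pos_divide_le_eq)
    then have "\<alpha> + a * lam / c * (wstar x - \<alpha>) \<le> (\<delta> + (1 - \<delta>) * (a * lam / c)) * wstar x"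
      and "(\<delta> + (1 - \<delta>) * (lam / (k * c))) * wstar x \<le> \<alpha> + lam / (k * c) * (wstar x - \<alpha>)"
      using affine_le_scaled[OF elim(4)] scaled_le_affine[OF elim(4)] by blast+
    ultimately show ?case
      using elim(1) by linarith
  qed
qed

lemma hilbert_ratio_LN_bound:
  assumes f: "f \<in> borel_measurable N" "\<And>x. x \<in> space N \<Longrightarrow> 0 \<le> f x"
    and bounds: "AE x in N. f x \<le> a * wstar x \<and> wstar x \<le> k * f x" and "0 < k"
  shows "hilbert_ratio N (LN N Q \<alpha> f) wstar
    \<le> ereal ((\<delta> + (1 - \<delta>) * (a * lam / pair_Q f)) / (\<delta> + (1 - \<delta>) * (lam / (k * pair_Q f))))"
proof -
  define D where "D = \<delta> + (1 - \<delta>) * (lam / (k * pair_Q f))"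
  have "0 < pair_Q f"
    using pair_Q_ratio_bounds[OF f bounds] lam_pos \<open>0 < k\<close>
    by (metis order_less_le_trans zero_less_mult_pos)
  then have "0 < D"
    using delta_pos delta_le_1 lam_pos \<open>0 < k\<close> by (simp add: D_def add_pos_nonneg)
  have "hilbert_ratio N (LN N Q \<alpha> f) wstar \<le> ereal ((\<delta> + (1 - \<delta>) * (a * lam / pair_Q f)) * (1 / D))"
  proof (rule hilbert_ratio_le)
    show "AE x in N. LN N Q \<alpha> f x \<le> (\<delta> + (1 - \<delta>) * (a * lam / pair_Q f)) * wstar x
        \<and> wstar x \<le> 1 / D * LN N Q \<alpha> f x"
      using LN_ratio_bounds[OF f bounds \<open>0 < k\<close>]
    proof (rule eventually_mono)
      fix x
      assume "LN N Q \<alpha> f x \<le> (\<delta> + (1 - \<delta>) * (a * lam / pair_Q f)) * wstar x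
        \<and> (\<delta> + (1 - \<delta>) * (lam / (k * pair_Q f))) * wstar x \<le> LN N Q \<alpha> f x"
      with \<open>0 < D\<close> show "LN N Q \<alpha> f x \<le> (\<delta> + (1 - \<delta>) * (a * lam / pair_Q f)) * wstar x
        \<and> wstar x \<le> 1 / D * LN N Q \<alpha> f x"
        by (simp only: D_def[symmetric]) (simp add: pos_le_divide_eq mult.commute)
    qed
    show "AE x in N. 0 < LN N Q \<alpha> f x \<and> 0 < wstar x"
      using alpha_le_wstar AE_space by eventually_elim (metis LN_ge_alpha alpha(1) f(2) order_less_le_trans)
  qed (use f wstar_meas LN_meas in auto)
  then show ?thesis
    by (simp add: D_def)
qed

lemma hilbert_ratio_LN_le:
  assumes f: "f \<in> borel_measurable N" "\<And>x. x \<in> space N \<Longrightarrow> 0 \<le> f x" "AE x in N. 0 < f x"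
    and ratio: "hilbert_ratio N f wstar \<le> ereal \<rho>"
  shows "hilbert_ratio N (LN N Q \<alpha> f) wstar \<le> ereal (\<delta> + (1 - \<delta>) * \<rho>)"
proof -
  have "AE x in N. 0 < f x \<and> 0 < wstar x"
    using f(3) alpha_le_wstar by eventually_elim (use alpha in simp)
  moreover have "hilbert_ratio N f wstar < \<infinity>"
    using ratio by (cases "hilbert_ratio N f wstar") auto
  ultimately obtain a k where ak: "0 < a" "0 < k" "hilbert_ratio N f wstar = ereal (a * k)"
    and bounds: "AE x in N. f x \<le> a * wstar x \<and> wstar x \<le> k * f x"
    by (rule hilbert_ratio_finite_bounds)
  define c where "c = pair_Q f"
  have c: "c \<le> a * lam" "lam \<le> k * c"
    using pair_Q_ratio_bounds[OF f(1,2) bounds] by (simp_all add: c_def)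
  then have "0 < c"
    using lam_pos ak by (metis order_less_le_trans zero_less_mult_pos)
  then have a': "1 \<le> a * lam / c" and b': "0 < lam / (k * c)" "lam / (k * c) \<le> 1"
    using c ak lam_pos by (simp_all add: pos_le_divide_eq pos_divide_le_eq)
  have "hilbert_ratio N (LN N Q \<alpha> f) wstar
      \<le> ereal ((\<delta> + (1 - \<delta>) * (a * lam / c)) / (\<delta> + (1 - \<delta>) * (lam / (k * c))))"
    using hilbert_ratio_LN_bound[OF f(1,2) bounds ak(2)] by (simp add: c_def)
  also have "\<dots> \<le> ereal (\<delta> + (1 - \<delta>) * ((a * lam / c) / (lam / (k * c))))"
    using convex_comb_divide_le[OF delta_pos delta_le_1 a' b'] by simp
  also have "(a * lam / c) / (lam / (k * c)) = a * k"
    using \<open>0 < c\<close> ak lam_pos by (simp add: field_simps)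
  also have "a * k \<le> \<rho>"
    using ratio ak(3) by simp
  then have "ereal (\<delta> + (1 - \<delta>) * (a * k)) \<le> ereal (\<delta> + (1 - \<delta>) * \<rho>)"
    using delta_le_1 by (simp add: mult_left_mono)
  finally show ?thesis .
qed

lemma hilbert_ratio_LN_finite:
  assumes f: "f \<in> borel_measurable N" "\<And>x. x \<in> space N \<Longrightarrow> 0 \<le> f x"
    and bounded: "AE x in N. f x \<le> B"
  shows "hilbert_ratio N (LN N Q \<alpha> f) wstar < \<infinity>"
proof -
  define B' where "B' = \<alpha> + (1 - \<alpha>) * (B * Qs) / pair_Q f"
  have "AE x in N. LN N Q \<alpha> f x \<le> (B' / \<alpha>) * wstar x \<and> wstar x \<le> (W / \<alpha>) * LN N Q \<alpha> f x"
    using bounded alpha_le_wstar wstar_le_W AE_space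
  proof eventually_elim
    case (elim x)
    have "f x * Q x \<le> B * Qs"
      using elim(1) f(2)[OF elim(4)] Q_nonneg[OF elim(4)] Q_le[OF elim(4)] by (intro mult_mono) auto
    then have LN_le: "LN N Q \<alpha> f x \<le> B'"
      using alpha pair_Q_nonneg[OF f(2)]
      by (simp add: LN_eq B'_def mult.assoc divide_right_mono)
    have LN_ge: "\<alpha> \<le> LN N Q \<alpha> f x"
      using LN_ge_alpha[OF f(2) elim(4)] .
    have "B' \<le> (B' / \<alpha>) * wstar x"
      using LN_le LN_ge elim(2) alpha by (simp add: field_simps mult_left_mono)
    moreover have "\<alpha> * wstar x \<le> LN N Q \<alpha> f x * W"
      using LN_ge elim(2,3) alpha by (intro mult_mono) auto
    then have "wstar x \<le> (W / \<alpha>) * LN N Q \<alpha> f x"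
      using alpha by (simp add: field_simps)
    ultimately show ?case
      using LN_le by linarith
  qed
  moreover have "AE x in N. 0 < LN N Q \<alpha> f x \<and> 0 < wstar x"
    using alpha_le_wstar AE_space by eventually_elim (metis LN_ge_alpha alpha(1) f(2) order_less_le_trans)
  ultimately have "hilbert_ratio N (LN N Q \<alpha> f) wstar \<le> ereal (B' / \<alpha> * (W / \<alpha>))"
    using f(1) wstar_meas LN_meas by (intro hilbert_ratio_le) auto
  then show ?thesis
    by (cases "hilbert_ratio N (LN N Q \<alpha> f) wstar") auto
qed

context
  fixes w :: "nat \<Rightarrow> 'a \<Rightarrow> real" and B :: real
  assumes iterate_meas: "\<And>t. w t \<in> borel_measurable N"
    and iterate_nonneg: "\<And>t x. x \<in> space N \<Longrightarrow> 0 \<le> w t x"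
    and initial_bounded: "AE x in N. w 0 x \<le> B"
    and iterate_LN: "\<And>t. AE x in N. w (Suc t) x = LN N Q \<alpha> (w t) x"
begin

lemma hilbert_ratio_iterate:
  "hilbert_ratio N (w (Suc t)) wstar = hilbert_ratio N (LN N Q \<alpha> (w t)) wstar"
  by (rule hilbert_ratio_cong_AE[OF iterate_meas LN_meas[OF iterate_meas] wstar_meas iterate_LN])

lemma iterate_pos: "AE x in N. 0 < w (Suc t) x"
  using iterate_LN[of t] AE_space
  by eventually_elim (metis LN_ge_alpha alpha(1) iterate_nonneg order_less_le_trans)

lemma hilbert_ratio_iterate_contraction:
  obtains \<rho> where "\<And>n. hilbert_ratio N (w (Suc n)) wstar = ereal (\<rho> n)"
    and "\<And>n. 1 \<le> \<rho> n" and "\<And>n. \<rho> (Suc n) \<le> \<delta> + (1 - \<delta>) * \<rho> n"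
proof -
  have pos: "AE x in N. 0 < w (Suc n) x \<and> 0 < wstar x" for n
    using iterate_pos[of n] alpha_le_wstar by eventually_elim (use alpha in simp)
  have one_le: "1 \<le> hilbert_ratio N (w (Suc n)) wstar" for n
    using pos by (rule one_le_hilbert_ratio)
  have finite: "hilbert_ratio N (w (Suc n)) wstar < \<infinity>" for n
  proof (induction n)
    case 0
    show ?case
      using hilbert_ratio_LN_finite[OF iterate_meas iterate_nonneg initial_bounded]
      by (simp add: hilbert_ratio_iterate)
  next
    case (Suc n)
    then have "hilbert_ratio N (w (Suc n)) wstar
        \<le> ereal (real_of_ereal (hilbert_ratio N (w (Suc n)) wstar))"
      using one_le[of n] by (cases "hilbert_ratio N (w (Suc n)) wstar") auto
    from hilbert_ratio_LN_le[OF iterate_meas iterate_nonneg iterate_pos this]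
    show ?case
      by (cases "hilbert_ratio N (w (Suc (Suc n))) wstar") (auto simp: hilbert_ratio_iterate)
  qed
  define \<rho> where "\<rho> n = real_of_ereal (hilbert_ratio N (w (Suc n)) wstar)" for n
  have ratio_eq: "hilbert_ratio N (w (Suc n)) wstar = ereal (\<rho> n)" for n
    using finite[of n] one_le[of n] by (cases "hilbert_ratio N (w (Suc n)) wstar") (auto simp: \<rho>_def)
  moreover have "1 \<le> \<rho> n" for n
    using one_le[of n] by (simp add: ratio_eq one_ereal_def[symmetric])
  moreover have "\<rho> (Suc n) \<le> \<delta> + (1 - \<delta>) * \<rho> n" for n
    using hilbert_ratio_LN_le[OF iterate_meas iterate_nonneg iterate_pos ratio_eq[THEN eq_refl]]
    by (simp add: ratio_eq hilbert_ratio_iterate[symmetric])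
  ultimately show thesis
    by (rule that)
qed

lemma hilbert_metric_iterate:
  defines "H \<equiv> \<lambda>t. hilbert_metric N (w t) wstar"
  shows "(\<forall>t\<ge>1. H t < \<infinity> \<and> H (Suc t) \<le> H t \<and> (H t \<noteq> 0 \<longrightarrow> H (Suc t) < H t)) \<and> H \<longlonglongrightarrow> 0"
proof -
  obtain \<rho> where ratio_eq: "\<And>n. hilbert_ratio N (w (Suc n)) wstar = ereal (\<rho> n)"
    and one_le: "\<And>n. 1 \<le> \<rho> n" and contraction: "\<And>n. \<rho> (Suc n) \<le> \<delta> + (1 - \<delta>) * \<rho> n"
    using hilbert_ratio_iterate_contraction by blast
  have H_Suc: "H (Suc n) = ereal (ln (\<rho> n))" for n
    by (simp add: H_def hilbert_metric_eq_ln_ratio ratio_eq)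
  have "H (Suc t) \<le> H t \<and> (H t \<noteq> 0 \<longrightarrow> H (Suc t) < H t)" if t_pos: "1 \<le> t" for t
  proof -
    obtain n where t: "t = Suc n"
      using t_pos by (cases t) auto
    have "\<rho> (Suc n) \<le> \<rho> n" "\<rho> n \<noteq> 1 \<Longrightarrow> \<rho> (Suc n) < \<rho> n"
      using affine_contraction_decreasing[OF delta_pos one_le contraction] by blast+
    then show ?thesis
      using one_le[of n] one_le[of "Suc n"] by (simp add: t H_Suc)
  qed
  moreover have "H t < \<infinity>" if "1 \<le> t" for t
    using that H_Suc by (cases t) auto
  moreover have "(\<lambda>n. ln (\<rho> n)) \<longlonglongrightarrow> 0"
    using delta_pos delta_le_1 one_le contraction by (rule affine_contraction_ln_tendsto_zero)
  then have "(\<lambda>n. ereal (ln (\<rho> n))) \<longlonglongrightarrow> ereal 0"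
    by (rule tendsto_ereal)
  then have "H \<longlonglongrightarrow> 0"
    unfolding H_Suc[symmetric] zero_ereal_def[symmetric] by (rule LIMSEQ_imp_Suc)
  ultimately show ?thesis
    by blast
qed

end

end

section \<open>The density iteration\<close>

lemma prob_space_density_prob_density:
  assumes "prob_density M p"
  shows "prob_space (density M p)"
proof (rule prob_spaceI)
  have "emeasure (density M p) (space M) = (\<integral>\<^sup>+ x. ennreal (p x) * indicator (space M) x \<partial>M)"
    using assms by (intro emeasure_density) (auto simp: prob_density_def)
  also have "\<dots> = (\<integral>\<^sup>+ x. ennreal (p x) \<partial>M)"
    by (intro nn_integral_cong) simp
  finally show "emeasure (density M p) (space (density M p)) = 1"
    using assms by (simp add: prob_density_def)
qed

lemma iterp_measurable:
  assumes "p0 \<in> borel_measurable M" "pref \<in> borel_measurable M" "Q \<in> borel_measurable M"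
  shows "iterp M \<alpha> Q pref p0 t \<in> borel_measurable M"
proof (induction t)
  case (Suc t)
  then show ?case
    unfolding iterp.simps using assms(2,3) by measurable
qed (simp add: assms(1))

lemma iterp_nonneg:
  assumes "\<And>x. x \<in> space M \<Longrightarrow> 0 \<le> p0 x" "\<And>x. x \<in> space M \<Longrightarrow> 0 \<le> pref x"
    and "\<And>x. x \<in> space M \<Longrightarrow> 0 \<le> Q x" "0 \<le> \<alpha>" "\<alpha> \<le> 1"
  shows "x \<in> space M \<Longrightarrow> 0 \<le> iterp M \<alpha> Q pref p0 t x"
proof (induction t arbitrary: x)
  case (Suc t)
  have "0 \<le> (\<integral>y. iterp M \<alpha> Q pref p0 t y * Q y \<partial>M)"
    using Suc.IH assms(3) by (intro integral_nonneg_AE AE_I2) simp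
  then show ?case
    using Suc assms by simp
qed (use assms(1) in simp)

lemma iterp_vanishes:
  assumes "AE x in M. pref x = 0 \<longrightarrow> p0 x = 0"
  shows "AE x in M. pref x = 0 \<longrightarrow> iterp M \<alpha> Q pref p0 t x = 0"
  by (induction t) (use assms in \<open>auto elim: eventually_mono\<close>)

text \<open>Since every \<open>p\<^sub>t\<close> vanishes where \<open>p\<^sub>r\<^sub>e\<^sub>f\<close> does, \<open>\<integral> p\<^sub>t Q d\<pi> = \<langle>w\<^sub>t, Q\<rangle>\<close>.\<close>

lemma iterp_ratio_LN:
  assumes p0: "p0 \<in> borel_measurable M"
    and pref: "pref \<in> borel_measurable M" "\<And>x. x \<in> space M \<Longrightarrow> 0 \<le> pref x"
    and Q: "Q \<in> borel_measurable M"
    and vanish: "AE x in M. pref x = 0 \<longrightarrow> p0 x = 0"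
  shows "AE x in density M pref. iterp M \<alpha> Q pref p0 (Suc t) x / pref x
    = LN (density M pref) Q \<alpha> (\<lambda>x. iterp M \<alpha> Q pref p0 t x / pref x) x"
proof -
  let ?p = "iterp M \<alpha> Q pref p0 t"
  have meas: "?p \<in> borel_measurable M"
    using p0 pref(1) Q by (rule iterp_measurable)
  have "(\<integral>x. ?p x / pref x * Q x \<partial>density M pref) = (\<integral>x. pref x *\<^sub>R (?p x / pref x * Q x) \<partial>M)"
    using meas pref Q by (intro integral_density) auto
  also have "\<dots> = (\<integral>x. ?p x * Q x \<partial>M)"
    using iterp_vanishes[OF vanish, of \<alpha> Q t]
    by (intro integral_cong_AE) (use meas pref Q in \<open>auto elim!: eventually_mono\<close>)
  finally have "(\<integral>x. ?p x / pref x * Q x \<partial>density M pref) = (\<integral>x. ?p x * Q x \<partial>M)" .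
  then show ?thesis
    using pref by (subst AE_density) (auto intro!: AE_I2 simp: LN_def add_divide_distrib)
qed

lemma LN_fixed_point_densityI:
  assumes pref: "prob_density M pref"
    and Q: "Q \<in> borel_measurable M" "\<And>x. x \<in> space M \<Longrightarrow> 0 \<le> Q x" "\<And>x. x \<in> space M \<Longrightarrow> Q x \<le> Qs"
    and alpha: "0 < \<alpha>" "\<alpha> < 1"
    and wstar: "prob_density (density M pref) wstar"
      "AE x in density M pref. LN (density M pref) Q \<alpha> wstar x = wstar x"
    and resolvent:
      "inverse (\<integral>\<^sup>+ x. (if Q x = Qs then \<infinity> else ennreal (Qs / (Qs - Q x))) * ennreal (pref x) \<partial>M)
        < ennreal \<alpha>"
  shows "LN_fixed_point (density M pref) Q Qs \<alpha> wstar"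
proof (intro LN_fixed_point.intro LN_fixed_point_axioms.intro)
  have "{x \<in> space M. Q x = Qs} \<in> sets M"
    using Q(1) by measurable
  moreover have "(\<lambda>x. ennreal (Qs / (Qs - Q x))) \<in> borel_measurable M"
    using Q(1) by measurable
  ultimately have "(\<lambda>x. if Q x = Qs then \<infinity> else ennreal (Qs / (Qs - Q x))) \<in> borel_measurable M"
    by (intro measurable_If measurable_const) simp_all
  moreover have "(\<lambda>x. ennreal (pref x)) \<in> borel_measurable M"
    using pref by (simp add: prob_density_def)
  ultimately have "(\<integral>\<^sup>+ x. (if Q x = Qs then \<infinity> else ennreal (Qs / (Qs - Q x))) \<partial>density M pref)
      = (\<integral>\<^sup>+ x. ennreal (pref x) * (if Q x = Qs then \<infinity> else ennreal (Qs / (Qs - Q x))) \<partial>M)"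
    by (intro nn_integral_density)
  then show "inverse (\<integral>\<^sup>+ x. (if Q x = Qs then \<infinity> else ennreal (Qs / (Qs - Q x))) \<partial>density M pref)
      < ennreal \<alpha>"
    using resolvent by (simp add: mult.commute)
qed (use pref Q alpha wstar prob_space_density_prob_density in auto)

lemma hilbert_metric_iterp:
  assumes fixed_point: "LN_fixed_point (density M pref) Q Qs \<alpha> wstar"
    and p0: "prob_density M p0" and pref: "prob_density M pref"
    and C: "AE x in M. p0 x \<le> C * pref x"
  defines "H \<equiv> \<lambda>t. hilbert_metric (density M pref) (\<lambda>x. iterp M \<alpha> Q pref p0 t x / pref x) wstar"
  shows "(\<forall>t\<ge>1. H t < \<infinity> \<and> H (Suc t) \<le> H t \<and> (H t \<noteq> 0 \<longrightarrow> H (Suc t) < H t)) \<and> H \<longlonglongrightarrow> 0"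
proof -
  interpret LN_fixed_point "density M pref" Q Qs \<alpha> wstar
    by (fact fixed_point)
  have p0_meas: "p0 \<in> borel_measurable M" and p0_nonneg: "\<And>x. x \<in> space M \<Longrightarrow> 0 \<le> p0 x"
    and pref_meas: "pref \<in> borel_measurable M" and pref_nonneg: "\<And>x. x \<in> space M \<Longrightarrow> 0 \<le> pref x"
    using p0 pref by (simp_all add: prob_density_def)
  have Q_meas_M: "Q \<in> borel_measurable M"
    using Q_meas by simp
  have vanish: "AE x in M. pref x = 0 \<longrightarrow> p0 x = 0"
    using C AE_space
  proof eventually_elim
    case (elim x)
    then show ?case
      using p0_nonneg[OF elim(2)] by auto
  qed
  let ?w = "\<lambda>t x. iterp M \<alpha> Q pref p0 t x / pref x"
  have w_meas: "?w t \<in> borel_measurable (density M pref)" for t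
    using iterp_measurable[OF p0_meas pref_meas Q_meas_M] pref_meas by measurable
  have w_nonneg: "0 \<le> ?w t x" if "x \<in> space (density M pref)" for t x
  proof -
    have "0 \<le> iterp M \<alpha> Q pref p0 t x"
      using that alpha by (intro iterp_nonneg[OF p0_nonneg pref_nonneg]) (auto intro: Q_nonneg)
    then show ?thesis
      using that pref_nonneg by simp
  qed
  have w_initial: "AE x in density M pref. ?w 0 x \<le> C"
  proof (subst AE_density)
    show "(\<lambda>x. ennreal (pref x)) \<in> borel_measurable M"
      using pref_meas by simp
    show "AE x in M. 0 < ennreal (pref x) \<longrightarrow> ?w 0 x \<le> C"
      using C by (rule eventually_mono) (simp add: pos_divide_le_eq)
  qed
  have w_iterate: "AE x in density M pref. ?w (Suc t) x = LN (density M pref) Q \<alpha> (?w t) x" for t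
    using iterp_ratio_LN[OF p0_meas pref_meas pref_nonneg Q_meas_M vanish] .
  from hilbert_metric_iterate[where w="?w" and B=C, OF w_meas w_nonneg w_initial w_iterate]
  show ?thesis
    unfolding H_def .
qed

lemma Qext_measurable:
  assumes "sigma_finite_measure P" "r \<in> borel_measurable M"
    and "(\<lambda>(x, \<omega>). eps x \<omega>) \<in> borel_measurable (M \<Otimes>\<^sub>M P)"
  shows "Qext P r eps \<in> borel_measurable M"
proof -
  have "(\<lambda>z. ennreal (exp ((\<lambda>(x, \<omega>). eps x \<omega>) z))) \<in> borel_measurable (M \<Otimes>\<^sub>M P)"
    using assms(3) by measurable
  then have "(\<lambda>(x, \<omega>). ennreal (exp (eps x \<omega>))) \<in> borel_measurable (M \<Otimes>\<^sub>M P)"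
    by (simp add: case_prod_beta')
  then have "(\<lambda>x. \<integral>\<^sup>+ \<omega>. ennreal (exp (eps x \<omega>)) \<partial>P) \<in> borel_measurable M"
    by (rule sigma_finite_measure.borel_measurable_nn_integral[OF assms(1)])
  then show ?thesis
    unfolding Qext_def[abs_def] using assms(2) by measurable
qed

lemma enn2ereal_eq_ereal_enn2real:
  assumes "enn2ereal q \<le> ereal c"
  shows "enn2ereal q = ereal (enn2real q)"
  using assms by (cases q) auto

theorem theorem6:
  fixes M :: "'a measure" and P :: "'b measure"
    and r :: "'a \<Rightarrow> real" and eps :: "'a \<Rightarrow> 'b \<Rightarrow> real"
    and \<alpha> :: real and p0 pref wstar :: "'a \<Rightarrow> real"
  assumes sf: "sigma_finite_measure M"
    and noise: "prob_space P"
    and r_meas: "r \<in> borel_measurable M"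
    and eps_meas: "(\<lambda>(x, \<omega>). eps x \<omega>) \<in> borel_measurable (M \<Otimes>\<^sub>M P)"
    and alpha: "0 < \<alpha>" "\<alpha> < 1"
    \<comment> \<open>(a)\<close>
    and p0_dens: "prob_density M p0" and pref_dens: "prob_density M pref"
    and p0_ent: "(\<integral>\<^sup>+ x. ennreal (p0 x * \<bar>ln (p0 x)\<bar>) \<partial>M) < \<infinity>"
    and pref_ent: "(\<integral>\<^sup>+ x. ennreal (pref x * \<bar>ln (pref x)\<bar>) \<partial>M) < \<infinity>"
    \<comment> \<open>(b)\<close>
    and mgf: "\<And>p. prob_density M p \<Longrightarrow>
        (\<integral>\<^sup>+ x. ennreal (p x) * (\<integral>\<^sup>+ \<omega>. ennreal (exp \<bar>r x + eps x \<omega>\<bar>) \<partial>P) \<partial>M) < \<infinity>"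
    \<comment> \<open>(c)\<close>
    and Qstar_pos: "0 < Qstar M P r eps" and Qstar_fin: "Qstar M P r eps < \<infinity>"
    and Q_le: "\<And>x. x \<in> space M \<Longrightarrow> enn2ereal (Qext P r eps x) \<le> Qstar M P r eps"
    \<comment> \<open>(d): ess sup_pi p0/pref < infinity\<close>
    and d: "\<exists>C::real. AE x in M. p0 x \<le> C * pref x"
    \<comment> \<open>(e)\<close>
    and e: "inverse (\<integral>\<^sup>+ x. (if enn2ereal (Qext P r eps x) = Qstar M P r eps then \<infinity>
               else ennreal (real_of_ereal (Qstar M P r eps) /
                 (real_of_ereal (Qstar M P r eps) - enn2real (Qext P r eps x)))) * ennreal (pref x) \<partial>M)
             < ennreal \<alpha>"
    \<comment> \<open>(f)\<close>
    and f: "essinf M (\<lambda>x. enn2ereal (Qext P r eps x)) > 0"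
    \<comment> \<open>w_* : the fixed point of L_N in P_{P_ref}, lying in the cone K\<close>
    and wstar_dens: "prob_density (density M pref) wstar"
    and wstar_pos: "AE x in density M pref. wstar x > 0"
    and wstar_fix: "AE x in density M pref.
        LN (density M pref) (\<lambda>y. enn2real (Qext P r eps y)) \<alpha> wstar x = wstar x"
  shows "(\<forall>t\<ge>1.
      hilbert_metric (density M pref)
        (\<lambda>x. iterp M \<alpha> (\<lambda>y. enn2real (Qext P r eps y)) pref p0 t x / pref x) wstar < \<infinity>
    \<and> hilbert_metric (density M pref)
        (\<lambda>x. iterp M \<alpha> (\<lambda>y. enn2real (Qext P r eps y)) pref p0 (Suc t) x / pref x) wstar
      \<le> hilbert_metric (density M pref)
        (\<lambda>x. iterp M \<alpha> (\<lambda>y. enn2real (Qext P r eps y)) pref p0 t x / pref x) wstar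
    \<and> (hilbert_metric (density M pref)
        (\<lambda>x. iterp M \<alpha> (\<lambda>y. enn2real (Qext P r eps y)) pref p0 t x / pref x) wstar \<noteq> 0
       \<longrightarrow> hilbert_metric (density M pref)
        (\<lambda>x. iterp M \<alpha> (\<lambda>y. enn2real (Qext P r eps y)) pref p0 (Suc t) x / pref x) wstar
      < hilbert_metric (density M pref)
        (\<lambda>x. iterp M \<alpha> (\<lambda>y. enn2real (Qext P r eps y)) pref p0 t x / pref x) wstar))
    \<and> (\<lambda>t. hilbert_metric (density M pref)
        (\<lambda>x. iterp M \<alpha> (\<lambda>y. enn2real (Qext P r eps y)) pref p0 t x / pref x) wstar)
         \<longlonglongrightarrow> 0"
proof -
  obtain Qs where Qs: "Qstar M P r eps = ereal Qs"
    using Qstar_pos Qstar_fin by (cases "Qstar M P r eps") auto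
  define Q where "Q = (\<lambda>x. enn2real (Qext P r eps x))"
  have Qext_eq: "enn2ereal (Qext P r eps x) = ereal (Q x)" if "x \<in> space M" for x
    unfolding Q_def by (rule enn2ereal_eq_ereal_enn2real[OF Q_le[OF that, unfolded Qs]])
  have Q_meas: "Q \<in> borel_measurable M"
    using Qext_measurable[OF prob_space_imp_sigma_finite[OF noise] r_meas eps_meas]
    unfolding Q_def by (rule borel_measurable_enn2real)
  have integrand: "(if enn2ereal (Qext P r eps x) = Qstar M P r eps then \<infinity>
      else ennreal (real_of_ereal (Qstar M P r eps) /
        (real_of_ereal (Qstar M P r eps) - enn2real (Qext P r eps x))))
    = (if Q x = Qs then \<infinity> else ennreal (Qs / (Qs - Q x)))" if "x \<in> space M" for x
    unfolding Qext_eq[OF that] Qs ereal.inject real_of_ereal.simps by (simp add: Q_def)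
  have "inverse (\<integral>\<^sup>+ x. (if Q x = Qs then \<infinity> else ennreal (Qs / (Qs - Q x))) * ennreal (pref x) \<partial>M)
      < ennreal \<alpha>"
    using e by (subst (asm) nn_integral_cong) (simp_all only: integrand)
  then have "LN_fixed_point (density M pref) Q Qs \<alpha> wstar"
    using Q_meas Q_le Qext_eq alpha wstar_dens wstar_fix
    by (intro LN_fixed_point_densityI[OF pref_dens]) (auto simp: Q_def Qs)
  moreover obtain C where "AE x in M. p0 x \<le> C * pref x"
    using d by blast
  ultimately show ?thesis
    using hilbert_metric_iterp[OF _ p0_dens pref_dens] unfolding Q_def by blast
qed

end
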